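(* Let $(S,g_1^0,g_2^0,g_3^0,D_1,D_2,D_3,\xi)\in\mathrm{MC}_{\mathrm{pre}}$. Then for all $A,B\in C^\infty(S,\mathbb{R})$ with $A,B>0$ and all $\sigma\in\{-1,+1\}$, $$\big(S,\,Ag_1^0,\,Ag_2^0,\,Ag_3^0,\,\sigma AB^{g_2^0+g_3^0}D_1,\,\sigma AB^{g_3^0+g_1^0}D_2,\,\sigma AB^{g_1^0+g_2^0}D_3,\,\xi+\log A+(g_1^0+g_2^0+g_3^0)\log B\big)\in\mathrm{MC}_{\mathrm{pre}}.$$
   Context: "Cyclic $(i,j,k)$" means $(i,j,k)\in\{(1,2,3),(2,3,1),(3,1,2)\}$. Let $S$ be a smooth manifold diffeomorphic to $\mathbb{R}^3$ and $D_1,D_2,D_3$ a frame of vector fields on $S$; its structure functions $c_{jk}^i\in C^\infty(S,\mathbb{R})$ are defined by $[D_j,D_k]=\sum_{i=1}^3c_{jk}^iD_i$ (so $c_{jk}^i=-c_{kj}^i$). $\mathrm{MC}_{\mathrm{pre}}$ is the set of tuples $(S,g_1^0,g_2^0,g_3^0,D_1,D_2,D_3,\xi)$ with $g_i^0,\xi\in C^\infty(S,\mathbb{R})$ satisfying (E1) $0=g_2^0g_3^0+g_3^0g_1^0+g_1^0g_2^0$, and (E2) $0=D_i(g_j^0+g_k^0)+c_{ij}^j(g_i^0-g_j^0)+c_{ik}^k(g_i^0-g_k^0)-2D_i(\xi)g_i^0$ for all cyclic $(i,j,k)$. Here $B^{f}$ means $e^{f\log B}$. *)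

theory Defs
  imports "HOL-Analysis.Analysis"
begin

text \<open>The manifold S (diffeomorphic to R^3) is modelled as R^3 itself, as the type real^3.\<close>

type_synonym pt = "real^3"

text \<open>Smooth (C-infinity) real functions on R^3: differentiable everywhere, and all
  partial derivatives are again smooth (greatest fixed point, i.e. all iterated partial
  derivatives exist).\<close>
coinductive smooth_fun :: "(pt \<Rightarrow> real) \<Rightarrow> bool" where
  "(\<forall>p. f differentiable (at p)) \<Longrightarrow>
   (\<forall>i. smooth_fun (\<lambda>p. frechet_derivative f (at p) (axis i 1))) \<Longrightarrow> smooth_fun f"

definition smooth_vf :: "(pt \<Rightarrow> real^3) \<Rightarrow> bool" where
  "smooth_vf X \<longleftrightarrow> (\<forall>i. smooth_fun (\<lambda>p. X p $ i))"

definition vf_app :: "(pt \<Rightarrow> real^3) \<Rightarrow> (pt \<Rightarrow> real) \<Rightarrow> pt \<Rightarrow> real" where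
  "vf_app X f p = frechet_derivative f (at p) (X p)"

text \<open>Lie bracket [X,Y] of vector fields, so that [X,Y](f) = X(Y f) - Y(X f).\<close>
definition lie_bracket :: "(pt \<Rightarrow> real^3) \<Rightarrow> (pt \<Rightarrow> real^3) \<Rightarrow> pt \<Rightarrow> real^3" where
  "lie_bracket X Y p = frechet_derivative Y (at p) (X p) - frechet_derivative X (at p) (Y p)"

definition is_frame :: "(nat \<Rightarrow> pt \<Rightarrow> real^3) \<Rightarrow> bool" where
  "is_frame D \<longleftrightarrow> (\<forall>i\<in>{1,2,3}. smooth_vf (D i)) \<and>
     (\<forall>p (a::nat \<Rightarrow> real). (\<Sum>n\<in>{1,2,3::nat}. a n *\<^sub>R D n p) = 0 \<longrightarrow> (\<forall>n\<in>{1,2,3}. a n = 0))"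

text \<open>Structure functions: [D_j, D_k] = sum_i c^i_{jk} D_i; struct_fun D i j k = c^i_{jk}.\<close>
definition struct_fun :: "(nat \<Rightarrow> pt \<Rightarrow> real^3) \<Rightarrow> nat \<Rightarrow> nat \<Rightarrow> nat \<Rightarrow> pt \<Rightarrow> real" where
  "struct_fun D i j k p =
     (THE a::nat \<Rightarrow> real. (\<forall>n. n \<notin> {1,2,3} \<longrightarrow> a n = 0) \<and>
        lie_bracket (D j) (D k) p = (\<Sum>n\<in>{1,2,3::nat}. a n *\<^sub>R D n p)) i"

definition idx3 :: "'a \<Rightarrow> 'a \<Rightarrow> 'a \<Rightarrow> nat \<Rightarrow> 'a" where
  "idx3 x1 x2 x3 n = (if n = 1 then x1 else if n = 2 then x2 else x3)"

definition cyclic3 :: "(nat \<times> nat \<times> nat) set" where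
  "cyclic3 = {(1,2,3), (2,3,1), (3,1,2)}"

definition MC_pre :: "(pt \<Rightarrow> real) \<Rightarrow> (pt \<Rightarrow> real) \<Rightarrow> (pt \<Rightarrow> real) \<Rightarrow>
    (pt \<Rightarrow> real^3) \<Rightarrow> (pt \<Rightarrow> real^3) \<Rightarrow> (pt \<Rightarrow> real^3) \<Rightarrow> (pt \<Rightarrow> real) \<Rightarrow> bool" where
  "MC_pre g1 g2 g3 D1 D2 D3 \<xi> \<longleftrightarrow>
     (let g = idx3 g1 g2 g3; D = idx3 D1 D2 D3; c = struct_fun D in
     smooth_fun g1 \<and> smooth_fun g2 \<and> smooth_fun g3 \<and> smooth_fun \<xi> \<and> is_frame D \<and>
     (\<forall>p. 0 = g2 p * g3 p + g3 p * g1 p + g1 p * g2 p) \<and>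
     (\<forall>(i,j,k)\<in>cyclic3. \<forall>p.
        0 = vf_app (D i) (\<lambda>q. g j q + g k q) p
            + c j i j p * (g i p - g j p) + c k i k p * (g i p - g k p)
            - 2 * vf_app (D i) \<xi> p * g i p))"

end

theory Submission
  imports Defs
begin

(* Rescaling the frame to D_i' = F_i D_i changes the structure functions by
   c'^j_ij = F_i (c^j_ij + D_i(log |F_j|)), since the Lie bracket picks up the derivatives of the
   factors. For F_j = sigma A B^(g_k + g_i) these logarithmic derivatives are
   D_i(log A) + D_i(g_k + g_i) log B + (g_k + g_i) D_i(log B). After dividing (E2) for the new data
   by F_i A, the D_i(log A) terms cancel, the log B terms add up to -log B times the derivative of
   (E1), and the D_i(log B) terms to -2 D_i(log B) times (E1); what remains is (E2) for the old
   data. *)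

(* smooth_fun is coinductive; its closure properties follow by coinduction up to this algebra,
   which contains every partial derivative of its members (hence the inverse, needed for ln). *)
inductive smooth_closure :: "(pt \<Rightarrow> real) \<Rightarrow> bool" where
  smooth_closure_base: "smooth_fun f \<Longrightarrow> smooth_closure f"
| smooth_closure_const: "smooth_closure (\<lambda>p. c)"
| smooth_closure_add: "smooth_closure f \<Longrightarrow> smooth_closure g \<Longrightarrow> smooth_closure (\<lambda>p. f p + g p)"
| smooth_closure_mult: "smooth_closure f \<Longrightarrow> smooth_closure g \<Longrightarrow> smooth_closure (\<lambda>p. f p * g p)"
| smooth_closure_exp: "smooth_closure f \<Longrightarrow> smooth_closure (\<lambda>p. exp (f p))"
| smooth_closure_inverse: "smooth_closure f \<Longrightarrow> \<forall>p. f p > 0 \<Longrightarrow> smooth_closure (\<lambda>p. inverse (f p))"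
| smooth_closure_ln: "smooth_closure f \<Longrightarrow> \<forall>p. f p > 0 \<Longrightarrow> smooth_closure (\<lambda>p. ln (f p))"

lemma frechet_derivative_eqI: "(f has_derivative f') (at p) \<Longrightarrow> frechet_derivative f (at p) = f'"
  by (metis frechet_derivative_at)

lemmas has_frechet_derivative = frechet_derivative_works[THEN iffD1]

lemma smooth_closure_partials:
  assumes "smooth_closure f"
  shows "(\<forall>p. f differentiable (at p)) \<and> (\<forall>i. smooth_closure (\<lambda>p. frechet_derivative f (at p) (axis i 1)))"
  using assms
proof induction
  case (smooth_closure_base f)
  then show ?case by (auto elim: smooth_fun.cases intro: smooth_closure.smooth_closure_base)
next
  case (smooth_closure_const c)
  then show ?case by (simp add: smooth_closure.smooth_closure_const)
next
  case (smooth_closure_add f g)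
  have "frechet_derivative (\<lambda>p. f p + g p) (at p) =
      (\<lambda>v. frechet_derivative f (at p) v + frechet_derivative g (at p) v)" for p
    using smooth_closure_add
    by (intro frechet_derivative_eqI has_derivative_add) (auto simp: frechet_derivative_works)
  then show ?case using smooth_closure_add by (auto intro!: smooth_closure.smooth_closure_add)
next
  case (smooth_closure_mult f g)
  have "frechet_derivative (\<lambda>p. f p * g p) (at p) =
      (\<lambda>v. f p * frechet_derivative g (at p) v + frechet_derivative f (at p) v * g p)" for p
    using smooth_closure_mult
    by (intro frechet_derivative_eqI has_derivative_mult) (auto simp: frechet_derivative_works)
  then show ?case using smooth_closure_mult
    by (auto intro!: smooth_closure.smooth_closure_add smooth_closure.smooth_closure_mult)
next
  case (smooth_closure_exp f)
  have D: "((\<lambda>p. exp (f p)) has_derivative (\<lambda>v. frechet_derivative f (at p) v * exp (f p))) (at p)" for p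
    using smooth_closure_exp
    by (intro DERIV_compose_FDERIV[where f=exp] DERIV_exp) (auto simp: frechet_derivative_works)
  then show ?case using smooth_closure_exp
    by (auto simp: D[THEN frechet_derivative_eqI] differentiable_def
        intro!: smooth_closure.smooth_closure_mult smooth_closure.smooth_closure_exp)
next
  case (smooth_closure_inverse f)
  have "(inverse has_real_derivative (-1) * (inverse (f p) * inverse (f p))) (at (f p))" for p
    using DERIV_inverse[of "f p" UNIV] smooth_closure_inverse(2) by (simp add: less_imp_neq[symmetric])
  then have D: "((\<lambda>p. inverse (f p)) has_derivative
      (\<lambda>v. frechet_derivative f (at p) v * ((-1) * (inverse (f p) * inverse (f p))))) (at p)" for p
    using smooth_closure_inverse by (intro DERIV_compose_FDERIV) (auto simp: frechet_derivative_works)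
  show ?case
  proof (intro conjI allI)
    show "(\<lambda>p. inverse (f p)) differentiable (at p)" for p
      using D by (auto simp: differentiable_def)
    show "smooth_closure (\<lambda>p. frechet_derivative (\<lambda>p. inverse (f p)) (at p) (axis i 1))" for i
      unfolding D[THEN frechet_derivative_eqI] using smooth_closure_inverse
      by (intro smooth_closure.smooth_closure_mult smooth_closure.smooth_closure_const
          smooth_closure.smooth_closure_inverse) auto
  qed
next
  case (smooth_closure_ln f)
  have D: "((\<lambda>p. ln (f p)) has_derivative (\<lambda>v. frechet_derivative f (at p) v * inverse (f p))) (at p)" for p
    using smooth_closure_ln
    by (intro DERIV_compose_FDERIV[where f=ln] DERIV_ln) (auto simp: frechet_derivative_works)
  then show ?case using smooth_closure_ln
    by (auto simp: D[THEN frechet_derivative_eqI] differentiable_def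
        intro!: smooth_closure.smooth_closure_mult smooth_closure.smooth_closure_inverse)
qed

lemma smooth_closure_smooth_fun: "smooth_closure f \<Longrightarrow> smooth_fun f"
  by (coinduction arbitrary: f rule: smooth_fun.coinduct) (use smooth_closure_partials in blast)

lemma smooth_fun_differentiable: "smooth_fun f \<Longrightarrow> f differentiable (at p)"
  by (erule smooth_fun.cases) auto

lemma smooth_fun_const: "smooth_fun (\<lambda>p. c)"
  and smooth_fun_add: "smooth_fun f \<Longrightarrow> smooth_fun g \<Longrightarrow> smooth_fun (\<lambda>p. f p + g p)"
  and smooth_fun_mult: "smooth_fun f \<Longrightarrow> smooth_fun g \<Longrightarrow> smooth_fun (\<lambda>p. f p * g p)"
  and smooth_fun_exp: "smooth_fun f \<Longrightarrow> smooth_fun (\<lambda>p. exp (f p))"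
  and smooth_fun_ln: "smooth_fun f \<Longrightarrow> \<forall>p. f p > 0 \<Longrightarrow> smooth_fun (\<lambda>p. ln (f p))"
  by (auto intro!: smooth_closure_smooth_fun intro: smooth_closure.intros)

lemmas smooth_fun_intros =
  smooth_fun_const smooth_fun_add smooth_fun_mult smooth_fun_exp smooth_fun_ln

lemma sum_123: "(\<Sum>n\<in>{1,2,3::nat}. f n) = f 1 + f 2 + f 3"
  by (simp add: add.assoc)

lemma is_frame_coeffs_zero:
  fixes a :: "nat \<Rightarrow> real"
  assumes "is_frame D" and "a 1 *\<^sub>R D 1 p + a 2 *\<^sub>R D 2 p + a 3 *\<^sub>R D 3 p = 0"
  shows "a 1 = 0" and "a 2 = 0" and "a 3 = 0"
  using assms unfolding is_frame_def sum_123 by blast+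

lemma is_frame_spans:
  fixes D :: "nat \<Rightarrow> pt \<Rightarrow> real^3"
  assumes "is_frame D"
  obtains a :: "nat \<Rightarrow> real" where "x = a 1 *\<^sub>R D 1 p + a 2 *\<^sub>R D 2 p + a 3 *\<^sub>R D 3 p"
proof -
  define \<phi> where "\<phi> y = y$1 *\<^sub>R D 1 p + y$2 *\<^sub>R D 2 p + y$3 *\<^sub>R D 3 p" for y :: "real^3"
  have lin: "linear \<phi>"
    unfolding \<phi>_def by (rule linearI) (auto simp: algebra_simps)
  have "inj \<phi>"
    unfolding linear_injective_0[OF lin]
  proof (intro allI impI)
    fix y assume "\<phi> y = 0"
    then have "(\<lambda>n::nat. y $ of_nat n) 1 *\<^sub>R D 1 p + (\<lambda>n::nat. y $ of_nat n) 2 *\<^sub>R D 2 p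
        + (\<lambda>n::nat. y $ of_nat n) 3 *\<^sub>R D 3 p = 0"
      unfolding \<phi>_def by simp
    from is_frame_coeffs_zero[OF assms this] show "y = 0"
      by (simp add: vec_eq_iff forall_3)
  qed
  then obtain y where "\<phi> y = x"
    using linear_injective_imp_surjective[OF lin] by (metis surjD)
  then show thesis
    by (intro that[of "\<lambda>n. y $ of_nat n"]) (simp add: \<phi>_def)
qed

lemma struct_fun_eqI:
  fixes a :: "nat \<Rightarrow> real"
  assumes frame: "is_frame D" and i: "i \<in> {1,2,3}"
    and rep: "lie_bracket (D j) (D k) p = a 1 *\<^sub>R D 1 p + a 2 *\<^sub>R D 2 p + a 3 *\<^sub>R D 3 p"
  shows "struct_fun D i j k p = a i"
proof -
  define a' where "a' n = (if n \<in> {1,2,3} then a n else 0)" for n :: nat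
  have "(THE b. (\<forall>n. n \<notin> {1,2,3} \<longrightarrow> b n = 0) \<and>
      lie_bracket (D j) (D k) p = (\<Sum>n\<in>{1,2,3::nat}. b n *\<^sub>R D n p)) = a'"
  proof (rule the_equality)
    show "(\<forall>n. n \<notin> {1,2,3} \<longrightarrow> a' n = 0) \<and>
        lie_bracket (D j) (D k) p = (\<Sum>n\<in>{1,2,3::nat}. a' n *\<^sub>R D n p)"
      using rep by (simp add: a'_def sum_123)
  next
    fix b assume b: "(\<forall>n. n \<notin> {1,2,3} \<longrightarrow> b n = 0) \<and>
        lie_bracket (D j) (D k) p = (\<Sum>n\<in>{1,2,3::nat}. b n *\<^sub>R D n p)"
    then have "(\<lambda>n. b n - a n) 1 *\<^sub>R D 1 p + (\<lambda>n. b n - a n) 2 *\<^sub>R D 2 p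
        + (\<lambda>n. b n - a n) 3 *\<^sub>R D 3 p = 0"
      using rep by (simp add: sum_123 algebra_simps)
    from is_frame_coeffs_zero[OF frame this] b show "b = a'"
      by (auto simp: a'_def)
  qed
  then show ?thesis
    using i by (simp add: struct_fun_def a'_def)
qed

lemma vf_app_const: "vf_app X (\<lambda>q. c) p = 0"
  by (simp add: vf_app_def)

lemma vf_app_add:
  assumes "f differentiable (at p)" and "g differentiable (at p)"
  shows "vf_app X (\<lambda>q. f q + g q) p = vf_app X f p + vf_app X g p"
  unfolding vf_app_def
  by (simp add: frechet_derivative_eqI[OF has_derivative_add[OF assms[THEN has_frechet_derivative]]])

lemma vf_app_mult:
  fixes f g :: "pt \<Rightarrow> real"
  assumes "f differentiable (at p)" and "g differentiable (at p)"
  shows "vf_app X (\<lambda>q. f q * g q) p = f p * vf_app X g p + vf_app X f p * g p"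
  unfolding vf_app_def
  by (simp add: frechet_derivative_eqI[OF has_derivative_mult[OF assms[THEN has_frechet_derivative]]])

lemma vf_app_exp:
  fixes f :: "pt \<Rightarrow> real"
  assumes "f differentiable (at p)"
  shows "vf_app X (\<lambda>q. exp (f q)) p = exp (f p) * vf_app X f p"
  unfolding vf_app_def
  by (simp add: frechet_derivative_eqI[OF DERIV_compose_FDERIV[OF DERIV_exp
        assms[THEN has_frechet_derivative]]])

lemma vf_app_ln:
  fixes f :: "pt \<Rightarrow> real"
  assumes "f differentiable (at p)" and "f p > 0"
  shows "vf_app X (\<lambda>q. ln (f q)) p = vf_app X f p / f p"
  unfolding vf_app_def
  by (simp add: frechet_derivative_eqI[OF DERIV_compose_FDERIV[OF DERIV_ln[OF assms(2)]
        assms(1)[THEN has_frechet_derivative]]] divide_inverse)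

lemma frechet_derivative_scaleR_arg:
  "f differentiable (at p) \<Longrightarrow> frechet_derivative f (at p) (c *\<^sub>R v) = c *\<^sub>R frechet_derivative f (at p) v"
  by (simp add: linear_frechet_derivative linear_cmul)

lemma vf_app_rescale:
  fixes f :: "pt \<Rightarrow> real"
  shows "f differentiable (at p) \<Longrightarrow> vf_app (\<lambda>q. c q *\<^sub>R X q) f p = c p * vf_app X f p"
  by (simp add: vf_app_def frechet_derivative_scaleR_arg)

lemma lie_bracket_rescale:
  fixes F G :: "pt \<Rightarrow> real" and X Y :: "pt \<Rightarrow> real^3"
  assumes "F differentiable (at p)" "G differentiable (at p)"
    and "X differentiable (at p)" "Y differentiable (at p)"
  shows "lie_bracket (\<lambda>q. F q *\<^sub>R X q) (\<lambda>q. G q *\<^sub>R Y q) p =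
    (F p * G p) *\<^sub>R lie_bracket X Y p + (F p * vf_app X G p) *\<^sub>R Y p - (G p * vf_app Y F p) *\<^sub>R X p"
  using assms
  by (simp add: lie_bracket_def vf_app_def frechet_derivative_scaleR_arg algebra_simps
      frechet_derivative_eqI[OF has_derivative_scaleR[OF assms(1,3)[THEN has_frechet_derivative]]]
      frechet_derivative_eqI[OF has_derivative_scaleR[OF assms(2,4)[THEN has_frechet_derivative]]])

lemma smooth_vf_differentiable:
  assumes "smooth_vf X"
  shows "X differentiable (at p)"
proof -
  have "(\<lambda>q. X q $ k) differentiable (at p)" for k
    using assms unfolding smooth_vf_def by (blast intro: smooth_fun_differentiable)
  then have "\<forall>b\<in>Basis. (\<lambda>q. X q \<bullet> b) differentiable (at p)"
    by (auto simp: Basis_vec_def cart_eq_inner_axis[symmetric])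
  then show ?thesis
    by (subst differentiable_componentwise_within)
qed

lemma is_frame_rescale:
  fixes D :: "nat \<Rightarrow> pt \<Rightarrow> real^3" and F :: "nat \<Rightarrow> pt \<Rightarrow> real"
  assumes frame: "is_frame D"
    and smooth: "\<And>n. n \<in> {1,2,3} \<Longrightarrow> smooth_fun (F n)"
    and nonzero: "\<And>n q. n \<in> {1,2,3} \<Longrightarrow> F n q \<noteq> 0"
  shows "is_frame (\<lambda>n q. F n q *\<^sub>R D n q)"
  unfolding is_frame_def
proof (intro conjI ballI allI impI)
  fix n :: nat assume n: "n \<in> {1,2,3}"
  then have "smooth_fun (\<lambda>q. D n q $ k)" for k
    using frame unfolding is_frame_def smooth_vf_def by blast
  then show "smooth_vf (\<lambda>q. F n q *\<^sub>R D n q)"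
    unfolding smooth_vf_def using smooth[OF n] by (simp add: smooth_fun_mult)
next
  fix p and a :: "nat \<Rightarrow> real" and n :: nat
  assume "(\<Sum>n\<in>{1,2,3}. a n *\<^sub>R F n p *\<^sub>R D n p) = 0" and n: "n \<in> {1,2,3}"
  then have "(\<lambda>n. a n * F n p) 1 *\<^sub>R D 1 p + (\<lambda>n. a n * F n p) 2 *\<^sub>R D 2 p
      + (\<lambda>n. a n * F n p) 3 *\<^sub>R D 3 p = 0"
    by (simp add: sum_123 add.assoc)
  from is_frame_coeffs_zero[OF frame this] n nonzero[OF n] show "a n = 0"
    by auto
qed

lemma struct_fun_rescale:
  fixes D :: "nat \<Rightarrow> pt \<Rightarrow> real^3" and F :: "nat \<Rightarrow> pt \<Rightarrow> real"
  assumes frame: "is_frame D" and frame': "is_frame (\<lambda>n q. F n q *\<^sub>R D n q)"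
    and nonzero: "\<And>n. n \<in> {1,2,3} \<Longrightarrow> F n p \<noteq> 0"
    and diff: "F i differentiable (at p)" "F j differentiable (at p)"
      "D i differentiable (at p)" "D j differentiable (at p)"
    and ij: "i \<in> {1,2,3}" "j \<in> {1,2,3}" "i \<noteq> j"
  shows "struct_fun (\<lambda>n q. F n q *\<^sub>R D n q) j i j p =
    F i p * (struct_fun D j i j p + vf_app (D i) (F j) p / F j p)"
proof -
  obtain a :: "nat \<Rightarrow> real"
    where a: "lie_bracket (D i) (D j) p = a 1 *\<^sub>R D 1 p + a 2 *\<^sub>R D 2 p + a 3 *\<^sub>R D 3 p"
    by (rule is_frame_spans[OF frame])
  then have rep: "lie_bracket (D i) (D j) p = (\<Sum>n\<in>{1,2,3}. a n *\<^sub>R D n p)"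
    by (simp only: sum_123)
  have c: "struct_fun D j i j p = a j"
    using struct_fun_eqI[OF frame ij(2) a] .
  define dFj where "dFj = vf_app (D i) (F j) p"
  define dFi where "dFi = vf_app (D j) (F i) p"
  \<comment> \<open>the coefficients of the bracket expansion below, divided by the rescaling factors\<close>
  define b where "b n = (F i p * F j p * a n + (if n = j then F i p * dFj else 0)
      - (if n = i then F j p * dFi else 0)) / F n p" for n
  have "b n *\<^sub>R F n p *\<^sub>R D n p = (F i p * F j p * a n) *\<^sub>R D n p
      + (if n = j then (F i p * dFj) *\<^sub>R D j p else 0) - (if n = i then (F j p * dFi) *\<^sub>R D i p else 0)"
    if "n \<in> {1,2,3}" for n
    using nonzero[OF that] by (simp add: b_def scaleR_add_left scaleR_diff_left)
  then have "(\<Sum>n\<in>{1,2,3}. b n *\<^sub>R F n p *\<^sub>R D n p) =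
      (\<Sum>n\<in>{1,2,3}. (F i p * F j p * a n) *\<^sub>R D n p)
      + (\<Sum>n\<in>{1,2,3}. if n = j then (F i p * dFj) *\<^sub>R D j p else 0)
      - (\<Sum>n\<in>{1,2,3}. if n = i then (F j p * dFi) *\<^sub>R D i p else 0)"
    by (simp only: sum.distrib[symmetric] sum_subtractf[symmetric] cong: sum.cong)
  also have "\<dots> = (F i p * F j p) *\<^sub>R (\<Sum>n\<in>{1,2,3}. a n *\<^sub>R D n p)
      + (F i p * dFj) *\<^sub>R D j p - (F j p * dFi) *\<^sub>R D i p"
    using ij by (simp only: scaleR_sum_right scaleR_scaleR sum.delta finite.intros) simp
  also have "\<dots> = lie_bracket (\<lambda>q. F i q *\<^sub>R D i q) (\<lambda>q. F j q *\<^sub>R D j q) p"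
    unfolding lie_bracket_rescale[OF diff] rep dFi_def dFj_def ..
  finally have "lie_bracket (\<lambda>q. F i q *\<^sub>R D i q) (\<lambda>q. F j q *\<^sub>R D j q) p =
      b 1 *\<^sub>R F 1 p *\<^sub>R D 1 p + b 2 *\<^sub>R F 2 p *\<^sub>R D 2 p + b 3 *\<^sub>R F 3 p *\<^sub>R D 3 p"
    unfolding sum_123 by (rule sym)
  from struct_fun_eqI[OF frame' ij(2) this]
  have "struct_fun (\<lambda>n q. F n q *\<^sub>R D n q) j i j p = b j" .
  then show ?thesis
    using ij nonzero[OF ij(2)] c by (simp add: b_def dFj_def field_simps)
qed

lemma rescaled_E2_identity:
  fixes a b c da db dc cj ck dx u w L A :: real
  assumes E2: "0 = db + dc + cj * (a - b) + ck * (a - c) - 2 * dx * a"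
    and E1: "b * c + c * a + a * b = 0"
    and dE1: "da * (b + c) + db * (c + a) + dc * (a + b) = 0"
  shows "0 = A * (db + dc) + A * u * (b + c)
    + (cj + (u + (dc + da) * L + (c + a) * w)) * (A * a - A * b)
    + (ck + (u + (da + db) * L + (a + b) * w)) * (A * a - A * c)
    - 2 * (dx + u + (da + db + dc) * L + (a + b + c) * w) * (A * a)"
proof -
  have "A * (db + dc) + A * u * (b + c)
    + (cj + (u + (dc + da) * L + (c + a) * w)) * (A * a - A * b)
    + (ck + (u + (da + db) * L + (a + b) * w)) * (A * a - A * c)
    - 2 * (dx + u + (da + db + dc) * L + (a + b + c) * w) * (A * a)
    = A * (db + dc + cj * (a - b) + ck * (a - c) - 2 * dx * a)
      - A * L * (da * (b + c) + db * (c + a) + dc * (a + b)) - 2 * A * w * (b * c + c * a + a * b)"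
    by algebra
  then show ?thesis
    using assms by simp
qed

lemma vf_app_log_scaled_exp:
  fixes A h :: "pt \<Rightarrow> real"
  assumes "smooth_fun A" "smooth_fun h" and "\<forall>q. A q > 0" and "\<sigma> \<noteq> 0"
  shows "vf_app X (\<lambda>q. \<sigma> * A q * exp (h q)) p / (\<sigma> * A p * exp (h p)) =
    vf_app X (\<lambda>q. ln (A q) + h q) p"
proof -
  have Ap: "A p \<noteq> 0"
    using assms(3) by (metis less_irrefl)
  then have "vf_app X (\<lambda>q. \<sigma> * A q * exp (h q)) p =
      \<sigma> * A p * exp (h p) * (vf_app X A p / A p + vf_app X h p)"
    using assms
    by (simp add: vf_app_mult vf_app_exp vf_app_const smooth_fun_differentiable smooth_fun_intros
        field_simps)
  then show ?thesis
    using assms Ap by (simp add: vf_app_add vf_app_ln smooth_fun_differentiable smooth_fun_intros)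
qed

lemma E2_rescaled_along:
  fixes X :: "pt \<Rightarrow> real^3" and ga gb gc A B \<xi> :: "pt \<Rightarrow> real" and cj ck :: real
  assumes smooth: "smooth_fun ga" "smooth_fun gb" "smooth_fun gc" "smooth_fun A" "smooth_fun B" "smooth_fun \<xi>"
    and pos: "\<forall>q. A q > 0" "\<forall>q. B q > 0"
    and E1: "\<forall>q. gb q * gc q + gc q * ga q + ga q * gb q = 0"
    and E2: "0 = vf_app X (\<lambda>q. gb q + gc q) p + cj * (ga p - gb p) + ck * (ga p - gc p)
      - 2 * vf_app X \<xi> p * ga p"
  shows "0 = vf_app X (\<lambda>q. A q * gb q + A q * gc q) p
      + (cj + vf_app X (\<lambda>q. ln (A q) + (gc q + ga q) * ln (B q)) p) * (A p * ga p - A p * gb p)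
      + (ck + vf_app X (\<lambda>q. ln (A q) + (ga q + gb q) * ln (B q)) p) * (A p * ga p - A p * gc p)
      - 2 * vf_app X (\<lambda>q. \<xi> q + ln (A q) + (ga q + gb q + gc q) * ln (B q)) p * (A p * ga p)"
proof -
  define da db dc dx where "da = vf_app X ga p" and "db = vf_app X gb p" and "dc = vf_app X gc p"
    and "dx = vf_app X \<xi> p"
  define u w L where "u = vf_app X A p / A p" and "w = vf_app X B p / B p" and "L = ln (B p)"
  have "A p > 0" "B p > 0"
    using pos by blast+
  then have "A p \<noteq> 0"
    by simp
  note rules = vf_app_add vf_app_mult vf_app_ln vf_app_const smooth_fun_differentiable smooth_fun_intros
    smooth pos da_def db_def dc_def dx_def u_def w_def L_def
  have d_Ag: "vf_app X (\<lambda>q. A q * gb q + A q * gc q) p = A p * (db + dc) + A p * u * (gb p + gc p)"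
    using \<open>A p \<noteq> 0\<close> by (simp add: rules field_simps)
  have d_hj: "vf_app X (\<lambda>q. ln (A q) + (gc q + ga q) * ln (B q)) p = u + (dc + da) * L + (gc p + ga p) * w"
    and d_hk: "vf_app X (\<lambda>q. ln (A q) + (ga q + gb q) * ln (B q)) p = u + (da + db) * L + (ga p + gb p) * w"
    and d_h\<xi>: "vf_app X (\<lambda>q. \<xi> q + ln (A q) + (ga q + gb q + gc q) * ln (B q)) p
      = dx + u + (da + db + dc) * L + (ga p + gb p + gc p) * w"
    using \<open>A p > 0\<close> \<open>B p > 0\<close> by (simp_all add: rules algebra_simps add_divide_distrib)
  have "(\<lambda>q. gb q * gc q + gc q * ga q + ga q * gb q) = (\<lambda>q. 0)"
    using E1 by simp
  then have "vf_app X (\<lambda>q. gb q * gc q + gc q * ga q + ga q * gb q) p = 0"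
    by (simp add: vf_app_const)
  then have dE1: "da * (gb p + gc p) + db * (gc p + ga p) + dc * (ga p + gb p) = 0"
    by (simp add: rules algebra_simps)
  have E2': "0 = db + dc + cj * (ga p - gb p) + ck * (ga p - gc p) - 2 * dx * ga p"
    using E2 by (simp add: rules)
  show ?thesis
    unfolding d_Ag d_hj d_hk d_h\<xi>
    by (rule rescaled_E2_identity[OF E2' E1[rule_format] dE1])
qed

lemma cyclic3_indices:
  "(i, j, k) \<in> cyclic3 \<Longrightarrow> i \<in> {1,2,3} \<and> j \<in> {1,2,3} \<and> k \<in> {1,2,3} \<and> i \<noteq> j \<and> i \<noteq> k"
  by (auto simp: cyclic3_def)

lemma cyclic3_rotate: "(i, j, k) \<in> cyclic3 \<Longrightarrow> (j, k, i) \<in> cyclic3"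
  by (auto simp: cyclic3_def)

lemma cyclic3_first: "n \<in> {1,2,3} \<Longrightarrow> \<exists>j k. (n, j, k) \<in> cyclic3"
  by (auto simp: cyclic3_def)

lemma E2_rescale:
  fixes D :: "nat \<Rightarrow> pt \<Rightarrow> real^3" and g F :: "nat \<Rightarrow> pt \<Rightarrow> real" and A B \<xi> :: "pt \<Rightarrow> real"
  assumes frame: "is_frame D"
    and F: "\<And>n. n \<in> {1,2,3} \<Longrightarrow> smooth_fun (F n)" "\<And>n q. n \<in> {1,2,3} \<Longrightarrow> F n q \<noteq> 0"
    and F_cyclic: "\<And>i j k. (i, j, k) \<in> cyclic3 \<Longrightarrow>
      F i = (\<lambda>q. \<sigma> * A q * exp ((g j q + g k q) * ln (B q)))"
    and ijk: "(i, j, k) \<in> cyclic3"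
    and smooth: "\<And>n. n \<in> {1,2,3} \<Longrightarrow> smooth_fun (g n)" "smooth_fun A" "smooth_fun B" "smooth_fun \<xi>"
    and pos: "\<forall>q. A q > 0" "\<forall>q. B q > 0" and \<sigma>: "\<sigma> \<noteq> 0"
    and E1: "\<forall>q. g j q * g k q + g k q * g i q + g i q * g j q = 0"
    and E2: "0 = vf_app (D i) (\<lambda>q. g j q + g k q) p + struct_fun D j i j p * (g i p - g j p)
      + struct_fun D k i k p * (g i p - g k p) - 2 * vf_app (D i) \<xi> p * g i p"
  shows "0 = vf_app (\<lambda>q. F i q *\<^sub>R D i q) (\<lambda>q. A q * g j q + A q * g k q) p
      + struct_fun (\<lambda>n q. F n q *\<^sub>R D n q) j i j p * (A p * g i p - A p * g j p)
      + struct_fun (\<lambda>n q. F n q *\<^sub>R D n q) k i k p * (A p * g i p - A p * g k p)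
      - 2 * vf_app (\<lambda>q. F i q *\<^sub>R D i q) (\<lambda>q. \<xi> q + ln (A q) + (g i q + g j q + g k q) * ln (B q)) p
        * (A p * g i p)"
proof -
  have idx: "i \<in> {1,2,3}" "j \<in> {1,2,3}" "k \<in> {1,2,3}" "i \<noteq> j" "i \<noteq> k"
    using cyclic3_indices[OF ijk] by auto
  have Fj: "F j = (\<lambda>q. \<sigma> * A q * exp ((g k q + g i q) * ln (B q)))"
    and Fk: "F k = (\<lambda>q. \<sigma> * A q * exp ((g i q + g j q) * ln (B q)))"
    using F_cyclic cyclic3_rotate[OF ijk] cyclic3_rotate[OF cyclic3_rotate[OF ijk]] by blast+
  have frame': "is_frame (\<lambda>n q. F n q *\<^sub>R D n q)"
    using is_frame_rescale[OF frame F] .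
  have diff: "D n differentiable (at p)" "F n differentiable (at p)" if "n \<in> {1,2,3}" for n
    using frame F(1)[OF that] that
    by (auto simp: is_frame_def smooth_vf_differentiable smooth_fun_differentiable)
  have smooth_ijk: "smooth_fun (g i)" "smooth_fun (g j)" "smooth_fun (g k)"
    using smooth(1) idx by auto
  note rules = smooth_fun_intros smooth_ijk smooth(2-4) pos \<sigma>
  have c_j: "struct_fun (\<lambda>n q. F n q *\<^sub>R D n q) j i j p = F i p * (struct_fun D j i j p
      + vf_app (D i) (\<lambda>q. ln (A q) + (g k q + g i q) * ln (B q)) p)"
    using struct_fun_rescale[OF frame frame' F(2) diff(2)[OF idx(1)] diff(2)[OF idx(2)]
        diff(1)[OF idx(1)] diff(1)[OF idx(2)] idx(1,2,4)]
      vf_app_log_scaled_exp[of A "\<lambda>q. (g k q + g i q) * ln (B q)"]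
    unfolding Fj by (simp add: rules)
  have c_k: "struct_fun (\<lambda>n q. F n q *\<^sub>R D n q) k i k p = F i p * (struct_fun D k i k p
      + vf_app (D i) (\<lambda>q. ln (A q) + (g i q + g j q) * ln (B q)) p)"
    using struct_fun_rescale[OF frame frame' F(2) diff(2)[OF idx(1)] diff(2)[OF idx(3)]
        diff(1)[OF idx(1)] diff(1)[OF idx(3)] idx(1,3,5)]
      vf_app_log_scaled_exp[of A "\<lambda>q. (g i q + g j q) * ln (B q)"]
    unfolding Fk by (simp add: rules)
  have vf: "vf_app (\<lambda>q. F i q *\<^sub>R D i q) h p = F i p * vf_app (D i) h p" if "smooth_fun h" for h
    using that by (simp add: vf_app_rescale smooth_fun_differentiable)
  have "0 = F i p * (vf_app (D i) (\<lambda>q. A q * g j q + A q * g k q) p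
      + (struct_fun D j i j p + vf_app (D i) (\<lambda>q. ln (A q) + (g k q + g i q) * ln (B q)) p)
        * (A p * g i p - A p * g j p)
      + (struct_fun D k i k p + vf_app (D i) (\<lambda>q. ln (A q) + (g i q + g j q) * ln (B q)) p)
        * (A p * g i p - A p * g k p)
      - 2 * vf_app (D i) (\<lambda>q. \<xi> q + ln (A q) + (g i q + g j q + g k q) * ln (B q)) p * (A p * g i p))"
    using E2_rescaled_along[OF smooth_ijk smooth(2-4) pos E1 E2]
    by simp
  then show ?thesis
    unfolding c_j c_k using pos by (simp add: vf rules algebra_simps)
qed

definition MC_pre_frame ::
    "(nat \<Rightarrow> pt \<Rightarrow> real) \<Rightarrow> (nat \<Rightarrow> pt \<Rightarrow> real^3) \<Rightarrow> (pt \<Rightarrow> real) \<Rightarrow> bool" where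
  "MC_pre_frame g D \<xi> \<longleftrightarrow>
     smooth_fun (g 1) \<and> smooth_fun (g 2) \<and> smooth_fun (g 3) \<and> smooth_fun \<xi> \<and> is_frame D \<and>
     (\<forall>p. 0 = g 2 p * g 3 p + g 3 p * g 1 p + g 1 p * g 2 p) \<and>
     (\<forall>(i,j,k)\<in>cyclic3. \<forall>p.
        0 = vf_app (D i) (\<lambda>q. g j q + g k q) p
            + struct_fun D j i j p * (g i p - g j p) + struct_fun D k i k p * (g i p - g k p)
            - 2 * vf_app (D i) \<xi> p * g i p)"

lemma idx3_simps [simp]: "idx3 x1 x2 x3 (Suc 0) = x1" "idx3 x1 x2 x3 2 = x2" "idx3 x1 x2 x3 3 = x3"
  by (simp_all add: idx3_def)

lemma MC_pre_iff_MC_pre_frame: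
  "MC_pre g1 g2 g3 D1 D2 D3 \<xi> \<longleftrightarrow> MC_pre_frame (idx3 g1 g2 g3) (idx3 D1 D2 D3) \<xi>"
  by (simp add: MC_pre_def MC_pre_frame_def Let_def)

lemma MC_pre_frame_rescale:
  fixes D :: "nat \<Rightarrow> pt \<Rightarrow> real^3" and g F :: "nat \<Rightarrow> pt \<Rightarrow> real" and A B \<xi> :: "pt \<Rightarrow> real"
  assumes MC: "MC_pre_frame g D \<xi>" and smooth: "smooth_fun A" "smooth_fun B"
    and pos: "\<forall>q. A q > 0" "\<forall>q. B q > 0" and \<sigma>: "\<sigma> \<noteq> 0"
    and F_cyclic: "\<And>i j k. (i, j, k) \<in> cyclic3 \<Longrightarrow>
      F i = (\<lambda>q. \<sigma> * A q * exp ((g j q + g k q) * ln (B q)))"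
  shows "MC_pre_frame (\<lambda>n p. A p * g n p) (\<lambda>n p. F n p *\<^sub>R D n p)
    (\<lambda>p. \<xi> p + ln (A p) + (g 1 p + g 2 p + g 3 p) * ln (B p))"
proof -
  have smooth_g: "smooth_fun (g n)" if "n \<in> {1,2,3}" for n
    using MC that by (auto simp: MC_pre_frame_def)
  have "A q \<noteq> 0" for q
    using pos(1) by (metis less_irrefl)
  have F: "smooth_fun (F n)" "F n q \<noteq> 0" if n: "n \<in> {1,2,3}" for n q
  proof -
    obtain j k where "(n, j, k) \<in> cyclic3"
      using cyclic3_first[OF n] by blast
    with F_cyclic cyclic3_indices[OF this] show "smooth_fun (F n)" "F n q \<noteq> 0"
      using smooth pos \<sigma> \<open>A q \<noteq> 0\<close> by (auto simp: smooth_g smooth_fun_intros)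
  qed
  have E1: "\<forall>p. 0 = g 2 p * g 3 p + g 3 p * g 1 p + g 1 p * g 2 p"
    and E2: "\<forall>(i,j,k)\<in>cyclic3. \<forall>p. 0 = vf_app (D i) (\<lambda>q. g j q + g k q) p
      + struct_fun D j i j p * (g i p - g j p) + struct_fun D k i k p * (g i p - g k p)
      - 2 * vf_app (D i) \<xi> p * g i p"
    and smooth_\<xi>: "smooth_fun \<xi>" and frame: "is_frame D"
    using MC by (simp_all add: MC_pre_frame_def)
  have E2': "\<forall>(i,j,k)\<in>cyclic3. \<forall>p.
      0 = vf_app (\<lambda>q. F i q *\<^sub>R D i q) (\<lambda>q. A q * g j q + A q * g k q) p
      + struct_fun (\<lambda>n q. F n q *\<^sub>R D n q) j i j p * (A p * g i p - A p * g j p)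
      + struct_fun (\<lambda>n q. F n q *\<^sub>R D n q) k i k p * (A p * g i p - A p * g k p)
      - 2 * vf_app (\<lambda>q. F i q *\<^sub>R D i q) (\<lambda>q. \<xi> q + ln (A q) + (g 1 q + g 2 q + g 3 q) * ln (B q)) p
        * (A p * g i p)"
  proof (clarify)
    fix i j k p assume ijk: "(i, j, k) \<in> cyclic3"
    have \<xi>': "(\<lambda>q. \<xi> q + ln (A q) + (g 1 q + g 2 q + g 3 q) * ln (B q)) =
        (\<lambda>q. \<xi> q + ln (A q) + (g i q + g j q + g k q) * ln (B q))"
      and E1': "\<forall>q. g j q * g k q + g k q * g i q + g i q * g j q = 0"
      using ijk E1 by (auto simp: cyclic3_def algebra_simps)
    have E2i: "0 = vf_app (D i) (\<lambda>q. g j q + g k q) p + struct_fun D j i j p * (g i p - g j p)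
        + struct_fun D k i k p * (g i p - g k p) - 2 * vf_app (D i) \<xi> p * g i p"
      using E2 ijk by blast
    show "0 = vf_app (\<lambda>q. F i q *\<^sub>R D i q) (\<lambda>q. A q * g j q + A q * g k q) p
      + struct_fun (\<lambda>n q. F n q *\<^sub>R D n q) j i j p * (A p * g i p - A p * g j p)
      + struct_fun (\<lambda>n q. F n q *\<^sub>R D n q) k i k p * (A p * g i p - A p * g k p)
      - 2 * vf_app (\<lambda>q. F i q *\<^sub>R D i q) (\<lambda>q. \<xi> q + ln (A q) + (g 1 q + g 2 q + g 3 q) * ln (B q)) p
        * (A p * g i p)"
      unfolding \<xi>'
      by (rule E2_rescale[where F = F and g = g, OF frame F F_cyclic ijk smooth_g smooth smooth_\<xi> pos \<sigma> E1' E2i])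
        simp_all
  qed
  have E1': "\<forall>p. 0 = A p * g 2 p * (A p * g 3 p) + A p * g 3 p * (A p * g 1 p) + A p * g 1 p * (A p * g 2 p)"
  proof
    fix p
    show "0 = A p * g 2 p * (A p * g 3 p) + A p * g 3 p * (A p * g 1 p) + A p * g 1 p * (A p * g 2 p)"
      using arg_cong[OF E1[rule_format, of p], of "\<lambda>x. A p * A p * x"] by (simp add: algebra_simps)
  qed
  have smooth_Ag: "smooth_fun (\<lambda>p. A p * g n p)" if "n \<in> {1,2,3}" for n
    using smooth(1) smooth_g[OF that] by (rule smooth_fun_mult)
  have "smooth_fun (\<lambda>p. \<xi> p + ln (A p) + (g 1 p + g 2 p + g 3 p) * ln (B p))"
    using smooth smooth_g smooth_\<xi> pos by (simp add: smooth_fun_intros)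
  then show ?thesis
    unfolding MC_pre_frame_def
    by (intro conjI is_frame_rescale[OF frame F] E1' E2' smooth_Ag) simp_all
qed

theorem lemma6p8:
  fixes g1 g2 g3 \<xi> A B :: "pt \<Rightarrow> real" and D1 D2 D3 :: "pt \<Rightarrow> real^3" and \<sigma> :: real
  assumes "MC_pre g1 g2 g3 D1 D2 D3 \<xi>"
    and "smooth_fun A" and "smooth_fun B"
    and "\<forall>p. A p > 0" and "\<forall>p. B p > 0"
    and "\<sigma> \<in> {-1, 1}"
  shows "MC_pre (\<lambda>p. A p * g1 p) (\<lambda>p. A p * g2 p) (\<lambda>p. A p * g3 p)
     (\<lambda>p. (\<sigma> * A p * exp ((g2 p + g3 p) * ln (B p))) *\<^sub>R D1 p)
     (\<lambda>p. (\<sigma> * A p * exp ((g3 p + g1 p) * ln (B p))) *\<^sub>R D2 p)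
     (\<lambda>p. (\<sigma> * A p * exp ((g1 p + g2 p) * ln (B p))) *\<^sub>R D3 p)
     (\<lambda>p. \<xi> p + ln (A p) + (g1 p + g2 p + g3 p) * ln (B p))"
proof -
  let ?F = "idx3 (\<lambda>p. \<sigma> * A p * exp ((g2 p + g3 p) * ln (B p)))
    (\<lambda>p. \<sigma> * A p * exp ((g3 p + g1 p) * ln (B p))) (\<lambda>p. \<sigma> * A p * exp ((g1 p + g2 p) * ln (B p)))"
  have "\<sigma> \<noteq> 0"
    using assms(6) by auto
  moreover have "?F i = (\<lambda>q. \<sigma> * A q * exp ((idx3 g1 g2 g3 j q + idx3 g1 g2 g3 k q) * ln (B q)))"
    if "(i, j, k) \<in> cyclic3" for i j k
    using that by (auto simp: cyclic3_def)
  ultimately have "MC_pre_frame (\<lambda>n p. A p * idx3 g1 g2 g3 n p) (\<lambda>n p. ?F n p *\<^sub>R idx3 D1 D2 D3 n p)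
      (\<lambda>p. \<xi> p + ln (A p) + (idx3 g1 g2 g3 1 p + idx3 g1 g2 g3 2 p + idx3 g1 g2 g3 3 p) * ln (B p))"
    by (rule MC_pre_frame_rescale[OF assms(1)[unfolded MC_pre_iff_MC_pre_frame] assms(2-5)])
  moreover have "(\<lambda>n p. A p * idx3 g1 g2 g3 n p) =
      idx3 (\<lambda>p. A p * g1 p) (\<lambda>p. A p * g2 p) (\<lambda>p. A p * g3 p)"
    and "(\<lambda>n p. ?F n p *\<^sub>R idx3 D1 D2 D3 n p) =
      idx3 (\<lambda>p. (\<sigma> * A p * exp ((g2 p + g3 p) * ln (B p))) *\<^sub>R D1 p)
      (\<lambda>p. (\<sigma> * A p * exp ((g3 p + g1 p) * ln (B p))) *\<^sub>R D2 p)
      (\<lambda>p. (\<sigma> * A p * exp ((g1 p + g2 p) * ln (B p))) *\<^sub>R D3 p)"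
    by (auto simp: idx3_def)
  ultimately show ?thesis
    unfolding MC_pre_iff_MC_pre_frame by (simp add: One_nat_def)
qed

end
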